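(* Let $E$ be a uniformly convex Banach space and $n$ a positive integer. For every $\varepsilon>0$ there is $\delta>0$ such that for all continuous isometric linear representations $\rho_1,\dots,\rho_n:\mathbb{R}\to\mathrm{O}(E)$, all $a_1,\dots,a_n\in\mathbb{R}$ and all $\xi\in E$: if $\|\rho_1(\gamma_{a_1})\cdots\rho_n(\gamma_{a_n})\xi\|\ge(1-\delta)\|\xi\|$, then $\max_{1\le i\le n}\max_{|t|\le e^{a_i}}\|\rho_i(t)\xi-\xi\|\le\varepsilon\|\xi\|$.
   Context: $\gamma_a$ is the centered Gaussian probability measure on $\mathbb{R}$ with variance $e^{2a}$, and $\rho(\gamma_a)=\int\rho(t)\,d\gamma_a(t)$ (strong integral, a bounded operator). $\mathrm{O}(E)$ is the group of linear isometries of $E$. *)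

theory Defs
  imports "HOL-Analysis.Analysis" "HOL-Probability.Probability"
begin

definition uniformly_convex :: "'a::real_normed_vector itself \<Rightarrow> bool" where
  "uniformly_convex (_::'a itself) \<longleftrightarrow>
     (\<forall>\<epsilon>>0. \<exists>\<delta>>0. \<forall>x y::'a. norm x \<le> 1 \<longrightarrow> norm y \<le> 1 \<longrightarrow> norm (x - y) \<ge> \<epsilon>
        \<longrightarrow> norm ((x + y) /\<^sub>R 2) \<le> 1 - \<delta>)"

definition isometric_rep :: "(real \<Rightarrow> 'a::real_normed_vector \<Rightarrow> 'a) \<Rightarrow> bool" where
  "isometric_rep \<rho> \<longleftrightarrow>
     (\<forall>t. linear (\<rho> t) \<and> (\<forall>x. norm (\<rho> t x) = norm x) \<and> surj (\<rho> t)) \<and>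
     \<rho> 0 = id \<and> (\<forall>s t. \<rho> (s + t) = \<rho> s \<circ> \<rho> t) \<and>
     (\<forall>x. continuous_on UNIV (\<lambda>t. \<rho> t x))"

text \<open>\<rho>(\<gamma>_a) \<xi> = \<integral> \<rho>(t) \<xi> d\<gamma>_a(t), \<gamma>_a the centered Gaussian with variance e^(2a),
  i.e. standard deviation e^a.\<close>
definition gauss_op :: "(real \<Rightarrow> 'a::real_normed_vector \<Rightarrow> 'a) \<Rightarrow> real \<Rightarrow> 'a \<Rightarrow> 'a" where
  "gauss_op \<rho> a \<xi> = integral UNIV (\<lambda>t. normal_density 0 (exp a) t *\<^sub>R \<rho> t \<xi>)"

definition gauss_prod :: "nat \<Rightarrow> (nat \<Rightarrow> real \<Rightarrow> 'a::real_normed_vector \<Rightarrow> 'a) \<Rightarrow> (nat \<Rightarrow> real) \<Rightarrow> 'a \<Rightarrow> 'a" where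
  "gauss_prod n \<rho> a = foldr (\<lambda>i f. gauss_op (\<rho> i) (a i) \<circ> f) [0..<n] id"

end

(*
  Write \<eta> = \<rho>(\<gamma>_a)\<xi>. Since every \<rho>(s) is an isometry and \<gamma>_a is a probability measure,
  2|\<eta>| \<le> \<integral> |\<rho>(s)\<xi> + \<eta>| d\<gamma>_a(s) \<le> 2|\<xi>|, so if |\<eta>| is almost |\<xi>| the defect
  2|\<xi>| - |\<rho>(s)\<xi> + \<eta>| has a small \<gamma>_a-average, hence (the Gaussian density being at least
  1/(6 e^a) on [-e^a, e^a]) a small Lebesgue average on that interval. For 0 \<le> t \<le> e^a some
  s \<in> [0, e^a] then has small defect at both s and s - t; uniform convexity puts \<rho>(s)\<xi> and
  \<rho>(s - t)\<xi> close to \<eta>, and since \<rho>(s - t) is an isometry, \<rho>(t)\<xi> is close to \<xi>.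
  In a product of n such operators every factor is a contraction, so each factor almost
  preserves the norm of the vector it acts on, and the errors add up along the chain.
*)
theory Submission
  imports Defs
begin

lemma normal_density_has_integral_1:
  assumes "0 < \<sigma>"
  shows "(normal_density \<mu> \<sigma> has_integral 1) UNIV"
  using has_integral_integral_lborel[OF integrable_normal_density[OF assms]]
    integral_normal_density[OF assms] by simp

lemma normal_density_ge:
  assumes "0 < \<sigma>" and "\<bar>s - \<mu>\<bar> \<le> \<sigma>"
  shows "1 / (6 * \<sigma>) \<le> normal_density \<mu> \<sigma> s"
proof -
  have "(s - \<mu>)\<^sup>2 \<le> \<sigma>\<^sup>2"
    using assms by (metis abs_ge_zero power2_abs power_mono)
  then have "- 1 / 2 \<le> - (s - \<mu>)\<^sup>2 / (2 * \<sigma>\<^sup>2)"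
    using assms by (simp add: field_simps)
  then have exp_ge: "1 / 2 \<le> exp (- (s - \<mu>)\<^sup>2 / (2 * \<sigma>\<^sup>2))"
    using exp_ge_add_one_self[of "- (s - \<mu>)\<^sup>2 / (2 * \<sigma>\<^sup>2)"] by linarith
  have "sqrt (2 * pi) \<le> 3"
    using pi_less_4 by (intro real_le_lsqrt) auto
  moreover have "sqrt (2 * pi * \<sigma>\<^sup>2) = sqrt (2 * pi) * \<sigma>"
    using assms by (simp add: real_sqrt_mult)
  ultimately have sqrt_le: "sqrt (2 * pi * \<sigma>\<^sup>2) \<le> 3 * \<sigma>" and "0 < sqrt (2 * pi * \<sigma>\<^sup>2)"
    using assms by auto
  then have "1 / (6 * \<sigma>) \<le> 1 / sqrt (2 * pi * \<sigma>\<^sup>2) * (1 / 2)"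
    using assms by (simp add: field_simps)
  also have "\<dots> \<le> 1 / sqrt (2 * pi * \<sigma>\<^sup>2) * exp (- (s - \<mu>)\<^sup>2 / (2 * \<sigma>\<^sup>2))"
    using exp_ge by (intro mult_left_mono) auto
  finally show ?thesis
    by (simp add: normal_density_def)
qed

lemma normal_density_mult_integrable_on:
  fixes g :: "real \<Rightarrow> real"
  assumes "0 < \<sigma>" and "continuous_on UNIV g" and "\<And>s. \<bar>g s\<bar> \<le> B"
  shows "(\<lambda>s. normal_density \<mu> \<sigma> s * g s) integrable_on UNIV"
proof (rule integrable_on_lborel, rule Bochner_Integration.integrable_bound)
  show "integrable lborel (\<lambda>s. normal_density \<mu> \<sigma> s * B)"
    using assms(1) by simp
  have "g \<in> borel_measurable borel"
    using assms(2) by (rule borel_measurable_continuous_onI)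
  then show "(\<lambda>s. normal_density \<mu> \<sigma> s * g s) \<in> borel_measurable lborel"
    by measurable
  show "AE s in lborel. norm (normal_density \<mu> \<sigma> s * g s) \<le> norm (normal_density \<mu> \<sigma> s * B)"
    using assms(3) by (auto simp: abs_mult intro!: mult_left_mono order.trans[OF _ abs_ge_self])
qed

lemma integral_Icc_le_normal_density_weighted:
  fixes h :: "real \<Rightarrow> real"
  assumes "0 < \<sigma>" and "continuous_on UNIV h" and "\<And>s. 0 \<le> h s"
    and "(\<lambda>s. normal_density 0 \<sigma> s * h s) integrable_on UNIV"
  shows "integral {-\<sigma>..\<sigma>} h \<le> 6 * \<sigma> * integral UNIV (\<lambda>s. normal_density 0 \<sigma> s * h s)"
proof -
  let ?ph = "\<lambda>s. normal_density 0 \<sigma> s * h s"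
  have "integral {-\<sigma>..\<sigma>} h \<le> integral {-\<sigma>..\<sigma>} (\<lambda>s. 6 * \<sigma> * ?ph s)"
  proof (rule integral_le)
    fix s assume "s \<in> {-\<sigma>..\<sigma>}"
    then have "1 \<le> 6 * \<sigma> * normal_density 0 \<sigma> s"
      using normal_density_ge[of \<sigma> s 0] assms(1) by (auto simp: field_simps)
    then have "1 * h s \<le> 6 * \<sigma> * normal_density 0 \<sigma> s * h s"
      by (rule mult_right_mono[OF _ assms(3)])
    then show "h s \<le> 6 * \<sigma> * ?ph s"
      by (simp add: mult.assoc)
  qed (use assms in \<open>auto intro!: integrable_continuous_interval continuous_intros
         continuous_on_subset[OF assms(2)] simp: normal_density_def\<close>)
  also have "\<dots> = 6 * \<sigma> * integral {-\<sigma>..\<sigma>} ?ph"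
    by simp
  also have "\<dots> \<le> 6 * \<sigma> * integral UNIV ?ph"
    using assms by (intro mult_left_mono integral_subset_le integrable_on_subinterval[OF assms(4)]) auto
  finally show ?thesis .
qed

lemma norm_add_le_weighted_integral:
  fixes f :: "'n::euclidean_space \<Rightarrow> 'a::banach"
  assumes "((\<lambda>s. p s *\<^sub>R f s) has_integral y) S" and "(p has_integral 1) S"
    and "\<And>s. s \<in> S \<Longrightarrow> 0 \<le> p s" and "(\<lambda>s. p s * norm (f s + v)) integrable_on S"
  shows "norm (y + v) \<le> integral S (\<lambda>s. p s * norm (f s + v))"
proof -
  have "((\<lambda>s. p s *\<^sub>R (f s + v)) has_integral y + v) S"
    using has_integral_add[OF assms(1) has_integral_scaleR_left[OF assms(2), of v]]
    by (simp add: scaleR_add_right)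
  with assms(3,4) show ?thesis
    by (metis (no_types, lifting) integral_unique has_integral_integrable integral_norm_bound_integral
        norm_scaleR abs_of_nonneg order_refl)
qed

lemma exists_small_pair_at_distance:
  fixes h :: "real \<Rightarrow> real"
  assumes "continuous_on UNIV h" and "\<And>s. 0 \<le> h s"
    and "2 * integral {-\<sigma>..\<sigma>} h < c * \<sigma>" and "t \<in> {0..\<sigma>}"
  shows "\<exists>s\<in>{0..\<sigma>}. h s < c \<and> h (s - t) < c"
proof (rule ccontr)
  assume "\<not> ?thesis"
  then have sum_ge: "c \<le> h s + h (s - t)" if "s \<in> {0..\<sigma>}" for s
    using that assms(2)[of s] assms(2)[of "s - t"] by force
  have cont_on: "continuous_on A h" "continuous_on A (\<lambda>s. h (s - t))" for A
    by (auto intro!: continuous_on_subset[OF assms(1)] continuous_on_compose2[OF assms(1)]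
        continuous_intros)
  have shifted: "integral {0..\<sigma>} (\<lambda>s. h (s - t)) = integral {-t..\<sigma>-t} h"
    using integral_shift_Icc_real[of 0 \<sigma> h "-t"] by (simp add: comp_def)
  have "c * \<sigma> = integral {0..\<sigma>} (\<lambda>s. c)"
    using assms(4) by simp
  also have "\<dots> \<le> integral {0..\<sigma>} (\<lambda>s. h s + h (s - t))"
    using sum_ge by (intro integral_le integrable_continuous_interval continuous_intros cont_on) auto
  also have "\<dots> = integral {0..\<sigma>} h + integral {-t..\<sigma>-t} h"
    by (simp add: integral_add integrable_continuous_interval cont_on shifted)
  also have "\<dots> \<le> 2 * integral {-\<sigma>..\<sigma>} h"
    using assms(2,4) integral_subset_le[of "{0..\<sigma>}" "{-\<sigma>..\<sigma>}" h]
      integral_subset_le[of "{-t..\<sigma>-t}" "{-\<sigma>..\<sigma>}" h]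
    by (auto simp: integrable_continuous_interval cont_on)
  finally show False
    using assms(3) by linarith
qed

lemma uniformly_convex_scaled:
  assumes "uniformly_convex TYPE('a::real_normed_vector)" and "0 < \<epsilon>"
  obtains d where "0 < d"
    and "\<And>r x y::'a. norm x \<le> r \<Longrightarrow> norm y \<le> r \<Longrightarrow> 2 * (1 - d) * r < norm (x + y)
           \<Longrightarrow> norm (x - y) < \<epsilon> * r"
proof -
  obtain d where "0 < d" and uc: "\<And>x y::'a. norm x \<le> 1 \<Longrightarrow> norm y \<le> 1 \<Longrightarrow> \<epsilon> \<le> norm (x - y)
      \<Longrightarrow> norm ((x + y) /\<^sub>R 2) \<le> 1 - d"
    using assms unfolding uniformly_convex_def by blast
  have "norm (x - y) < \<epsilon> * r"
    if x: "norm x \<le> r" and y: "norm y \<le> r" and sum: "2 * (1 - d) * r < norm (x + y)"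
    for r :: real and x y :: 'a
  proof (rule ccontr)
    assume far: "\<not> norm (x - y) < \<epsilon> * r"
    have r: "0 < r"
    proof (rule ccontr)
      assume "\<not> 0 < r"
      then have "norm x = 0" and "norm y = 0" and "r = 0"
        using x y norm_ge_zero[of x] norm_ge_zero[of y] by linarith+
      with sum show False
        by simp
    qed
    have "norm (x /\<^sub>R r) \<le> 1" and "norm (y /\<^sub>R r) \<le> 1"
      using x y r by (simp_all add: divide_le_eq_1 inverse_eq_divide)
    moreover have "\<epsilon> \<le> norm (x /\<^sub>R r - y /\<^sub>R r)"
      using far r by (simp add: le_divide_eq inverse_eq_divide flip: scaleR_diff_right)
    ultimately have "norm ((x /\<^sub>R r + y /\<^sub>R r) /\<^sub>R 2) \<le> 1 - d"
      by (rule uc)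
    also have "(x /\<^sub>R r + y /\<^sub>R r) /\<^sub>R 2 = (1 / (2 * r)) *\<^sub>R (x + y)"
      by (simp add: scaleR_add_right inverse_eq_divide)
    finally have "norm (x + y) \<le> 2 * (1 - d) * r"
      using r by (simp add: pos_divide_le_eq mult_ac)
    with sum show False
      by linarith
  qed
  with \<open>0 < d\<close> show thesis
    by (rule that)
qed

lemma
  assumes "isometric_rep \<rho>"
  shows isometric_rep_linear: "linear (\<rho> t)"
    and isometric_rep_norm: "norm (\<rho> t x) = norm x"
    and isometric_rep_zero: "\<rho> 0 = id"
    and isometric_rep_add: "\<rho> (s + t) x = \<rho> s (\<rho> t x)"
    and isometric_rep_continuous: "continuous_on UNIV (\<lambda>t. \<rho> t x)"
  using assms unfolding isometric_rep_def by auto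

lemma isometric_rep_norm_diff_shift:
  assumes "isometric_rep \<rho>"
  shows "norm (\<rho> s \<xi> - \<rho> (s - t) \<xi>) = norm (\<rho> t \<xi> - \<xi>)"
proof -
  have "\<rho> s \<xi> - \<rho> (s - t) \<xi> = \<rho> (s - t) (\<rho> t \<xi> - \<xi>)"
    using isometric_rep_add[OF assms, of "s - t" t \<xi>]
      linear_diff[OF isometric_rep_linear[OF assms]] by simp
  then show ?thesis
    by (simp add: isometric_rep_norm[OF assms])
qed

lemma isometric_rep_norm_diff_uminus:
  assumes "isometric_rep \<rho>"
  shows "norm (\<rho> (- t) \<xi> - \<xi>) = norm (\<rho> t \<xi> - \<xi>)"
  using isometric_rep_norm_diff_shift[OF assms, of 0 \<xi> t]
  by (simp add: isometric_rep_zero[OF assms] norm_minus_commute)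

lemma isometric_rep_displacement_le:
  assumes "isometric_rep \<rho>"
  shows "norm (\<rho> t \<xi> - \<xi>) \<le> norm (\<rho> t \<zeta> - \<zeta>) + 2 * norm (\<xi> - \<zeta>)"
proof -
  have "\<rho> t \<xi> - \<xi> = \<rho> t (\<xi> - \<zeta>) + (\<rho> t \<zeta> - \<zeta>) + (\<zeta> - \<xi>)"
    using linear_diff[OF isometric_rep_linear[OF assms]] by simp
  also have "norm \<dots> \<le> norm (\<rho> t (\<xi> - \<zeta>)) + norm (\<rho> t \<zeta> - \<zeta>) + norm (\<zeta> - \<xi>)"
    by (intro norm_triangle_le add_right_mono norm_triangle_ineq)
  finally show ?thesis
    by (simp add: isometric_rep_norm[OF assms] norm_minus_commute)
qed

text \<open>A nonzero value excludes the junk value 0 that \<open>integral\<close> takes on non-integrable functions.\<close>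
lemma has_integral_gauss_op:
  assumes "gauss_op \<rho> a \<xi> \<noteq> 0"
  shows "((\<lambda>t. normal_density 0 (exp a) t *\<^sub>R \<rho> t \<xi>) has_integral gauss_op \<rho> a \<xi>) UNIV"
  using assms not_integrable_integral[of _ UNIV] integrable_integral
  unfolding gauss_op_def by metis

lemma norm_gauss_op_le:
  fixes \<xi> :: "'a::banach"
  assumes "isometric_rep \<rho>"
  shows "norm (gauss_op \<rho> a \<xi>) \<le> norm \<xi>"
proof (cases "gauss_op \<rho> a \<xi> = 0")
  case False
  have density: "(normal_density 0 (exp a) has_integral 1) UNIV"
    by (simp add: normal_density_has_integral_1)
  have "((\<lambda>s. normal_density 0 (exp a) s * norm (\<rho> s \<xi> + 0)) has_integral norm \<xi>) UNIV"
    using has_integral_mult_left[OF density, of "norm \<xi>"]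
    by (simp add: isometric_rep_norm[OF assms] mult.commute)
  then have "norm (gauss_op \<rho> a \<xi> + 0) \<le> norm \<xi>"
    using norm_add_le_weighted_integral[where f="\<lambda>s. \<rho> s \<xi>" and v=0,
        OF has_integral_gauss_op[OF False] density]
    by (simp add: integral_unique has_integral_integrable)
  then show ?thesis
    by simp
qed simp

lemma integral_defect_gauss_op_le:
  fixes \<xi> :: "'a::banach"
  assumes rep: "isometric_rep \<rho>" and \<xi>: "norm \<xi> \<le> r" and nonzero: "gauss_op \<rho> a \<xi> \<noteq> 0"
  shows "integral {-exp a..exp a} (\<lambda>s. 2 * r - norm (\<rho> s \<xi> + gauss_op \<rho> a \<xi>))
           \<le> 12 * exp a * (r - norm (gauss_op \<rho> a \<xi>))"
proof -
  define \<eta> where "\<eta> = gauss_op \<rho> a \<xi>"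
  define p where "p = normal_density 0 (exp a)"
  define G where "G s = norm (\<rho> s \<xi> + \<eta>)" for s
  have density: "(p has_integral 1) UNIV"
    by (simp add: p_def normal_density_has_integral_1)
  have G_cont: "continuous_on UNIV G"
    unfolding G_def by (intro continuous_intros isometric_rep_continuous[OF rep])
  have G_le: "G s \<le> 2 * r" for s
    using norm_triangle_ineq[of "\<rho> s \<xi>" \<eta>] norm_gauss_op_le[OF rep, of a \<xi>] \<xi>
    by (simp add: G_def \<eta>_def isometric_rep_norm[OF rep])
  have "\<bar>G s\<bar> \<le> 2 * r" for s
    using G_le by (simp add: G_def)
  then have pG_int: "(\<lambda>s. p s * G s) integrable_on UNIV"
    unfolding p_def by (rule normal_density_mult_integrable_on[OF exp_gt_zero G_cont])
  have "norm (\<eta> + \<eta>) \<le> integral UNIV (\<lambda>s. p s * G s)"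
    unfolding G_def
  proof (rule norm_add_le_weighted_integral[where f="\<lambda>s. \<rho> s \<xi>", OF _ density])
    show "((\<lambda>s. p s *\<^sub>R \<rho> s \<xi>) has_integral \<eta>) UNIV"
      unfolding p_def \<eta>_def using nonzero by (rule has_integral_gauss_op)
    show "(\<lambda>s. p s * norm (\<rho> s \<xi> + \<eta>)) integrable_on UNIV"
      using pG_int by (simp add: G_def)
  qed (simp add: p_def)
  then have G_ge: "2 * norm \<eta> \<le> integral UNIV (\<lambda>s. p s * G s)"
    by (simp flip: scaleR_2)
  have defect: "((\<lambda>s. p s * (2 * r - G s)) has_integral 2 * r - integral UNIV (\<lambda>s. p s * G s)) UNIV"
    using has_integral_diff[OF has_integral_mult_left[OF density, of "2 * r"] integrable_integral[OF pG_int]]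
    by (simp add: right_diff_distrib mult.commute)
  have "integral {-exp a..exp a} (\<lambda>s. 2 * r - G s)
      \<le> 6 * exp a * integral UNIV (\<lambda>s. p s * (2 * r - G s))"
    unfolding p_def
  proof (rule integral_Icc_le_normal_density_weighted)
    show "continuous_on UNIV (\<lambda>s. 2 * r - G s)"
      by (intro continuous_intros G_cont)
    show "(\<lambda>s. normal_density 0 (exp a) s * (2 * r - G s)) integrable_on UNIV"
      using defect unfolding p_def by blast
  qed (use G_le in simp_all)
  also have "\<dots> \<le> 6 * exp a * (2 * r - 2 * norm \<eta>)"
    using G_ge integral_unique[OF defect] by (intro mult_left_mono) simp_all
  also have "\<dots> = 12 * exp a * (r - norm \<eta>)"
    by (simp add: algebra_simps)
  finally show ?thesis
    by (simp add: G_def \<eta>_def)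
qed

lemma gauss_op_small_defect_imp_almost_invariant:
  fixes \<xi> :: "'a::banach"
  assumes rep: "isometric_rep \<rho>" and \<xi>: "norm \<xi> \<le> r" and nonzero: "gauss_op \<rho> a \<xi> \<noteq> 0"
    and uc: "\<And>x y::'a. norm x \<le> r \<Longrightarrow> norm y \<le> r \<Longrightarrow> 2 * (1 - d) * r < norm (x + y)
               \<Longrightarrow> norm (x - y) < c"
    and defect: "12 * (r - norm (gauss_op \<rho> a \<xi>)) < d * r"
  shows "\<forall>t. \<bar>t\<bar> \<le> exp a \<longrightarrow> norm (\<rho> t \<xi> - \<xi>) < 2 * c"
    and "norm (gauss_op \<rho> a \<xi> - \<xi>) < 3 * c"
proof -
  define \<sigma> where "\<sigma> = exp a"
  define \<eta> where "\<eta> = gauss_op \<rho> a \<xi>"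
  define h where "h = (\<lambda>s. 2 * r - norm (\<rho> s \<xi> + \<eta>))"
  have h_nonneg: "0 \<le> h s" for s
    using norm_triangle_ineq[of "\<rho> s \<xi>" \<eta>] norm_gauss_op_le[OF rep, of a \<xi>] \<xi>
    by (simp add: h_def \<eta>_def isometric_rep_norm[OF rep])
  have h_cont: "continuous_on UNIV h"
    unfolding h_def by (intro continuous_intros isometric_rep_continuous[OF rep])
  have "2 * integral {-\<sigma>..\<sigma>} h \<le> 2 * (12 * \<sigma> * (r - norm \<eta>))"
    using integral_defect_gauss_op_le[OF rep \<xi> nonzero] by (simp add: h_def \<eta>_def \<sigma>_def)
  also have "\<dots> < 2 * d * r * \<sigma>"
    using mult_strict_left_mono[OF defect, of "2 * \<sigma>"] by (simp add: \<eta>_def \<sigma>_def algebra_simps)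
  finally have pair: "\<exists>s\<in>{0..\<sigma>}. h s < 2 * d * r \<and> h (s - t) < 2 * d * r" if "t \<in> {0..\<sigma>}" for t
    using h_cont h_nonneg that by (intro exists_small_pair_at_distance)
  have near: "norm (\<rho> s \<xi> - \<eta>) < c" if "h s < 2 * d * r" for s
    using that \<xi> norm_gauss_op_le[OF rep, of a \<xi>]
    by (intro uc) (simp_all add: h_def \<eta>_def isometric_rep_norm[OF rep] algebra_simps)
  have move: "norm (\<rho> t \<xi> - \<xi>) < 2 * c" if t: "t \<in> {0..\<sigma>}" for t
  proof -
    obtain s where "h s < 2 * d * r" and "h (s - t) < 2 * d * r"
      using pair[OF t] by blast
    have "norm (\<rho> t \<xi> - \<xi>) = norm ((\<rho> s \<xi> - \<eta>) - (\<rho> (s - t) \<xi> - \<eta>))"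
      using isometric_rep_norm_diff_shift[OF rep, of s \<xi> t] by simp
    also have "\<dots> \<le> norm (\<rho> s \<xi> - \<eta>) + norm (\<rho> (s - t) \<xi> - \<eta>)"
      by (rule norm_triangle_ineq4)
    also have "\<dots> < 2 * c"
      using near[OF \<open>h s < _\<close>] near[OF \<open>h (s - t) < _\<close>] by linarith
    finally show ?thesis .
  qed
  show "\<forall>t. \<bar>t\<bar> \<le> exp a \<longrightarrow> norm (\<rho> t \<xi> - \<xi>) < 2 * c"
  proof (intro allI impI)
    fix t assume "\<bar>t\<bar> \<le> exp a"
    then have "norm (\<rho> \<bar>t\<bar> \<xi> - \<xi>) < 2 * c"
      by (intro move) (simp add: \<sigma>_def)
    then show "norm (\<rho> t \<xi> - \<xi>) < 2 * c"
      using isometric_rep_norm_diff_uminus[OF rep, of t \<xi>] by (cases "0 \<le> t") simp_all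
  qed
  obtain s where "s \<in> {0..\<sigma>}" and "h s < 2 * d * r"
    using pair[of 0] by (auto simp: \<sigma>_def)
  have "norm (\<eta> - \<xi>) \<le> norm (\<rho> s \<xi> - \<eta>) + norm (\<rho> s \<xi> - \<xi>)"
    using norm_triangle_ineq4[of "\<rho> s \<xi> - \<xi>" "\<rho> s \<xi> - \<eta>"] by (simp add: algebra_simps)
  also have "\<dots> < 3 * c"
    using near[OF \<open>h s < _\<close>] move[OF \<open>s \<in> _\<close>] by simp
  finally show "norm (gauss_op \<rho> a \<xi> - \<xi>) < 3 * c"
    by (simp add: \<eta>_def)
qed

definition gauss_rigid :: "real \<Rightarrow> real \<Rightarrow> (real \<Rightarrow> 'a::real_normed_vector \<Rightarrow> 'a) \<Rightarrow> bool" where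
  "gauss_rigid \<delta> \<epsilon> \<rho> \<longleftrightarrow> (\<forall>a \<xi> r. norm \<xi> \<le> r \<longrightarrow> (1 - \<delta>) * r \<le> norm (gauss_op \<rho> a \<xi>) \<longrightarrow>
     (\<forall>t. \<bar>t\<bar> \<le> exp a \<longrightarrow> norm (\<rho> t \<xi> - \<xi>) \<le> \<epsilon> * r) \<and> norm (gauss_op \<rho> a \<xi> - \<xi>) \<le> \<epsilon> * r)"

lemma isometric_rep_gauss_rigid:
  fixes \<rho> :: "real \<Rightarrow> 'a::banach \<Rightarrow> 'a"
  assumes rep: "isometric_rep \<rho>" and "0 < d"
    and uc: "\<And>r x y::'a. norm x \<le> r \<Longrightarrow> norm y \<le> r \<Longrightarrow> 2 * (1 - d) * r < norm (x + y)
               \<Longrightarrow> norm (x - y) < \<epsilon> / 3 * r"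
  shows "gauss_rigid (min (d / 24) (1 / 2)) \<epsilon> \<rho>"
  unfolding gauss_rigid_def
proof (intro allI impI)
  fix a \<xi> r
  define \<delta> where "\<delta> = min (d / 24) (1 / 2)"
  assume \<xi>: "norm \<xi> \<le> r" and big: "(1 - min (d / 24) (1 / 2)) * r \<le> norm (gauss_op \<rho> a \<xi>)"
  show "(\<forall>t. \<bar>t\<bar> \<le> exp a \<longrightarrow> norm (\<rho> t \<xi> - \<xi>) \<le> \<epsilon> * r) \<and> norm (gauss_op \<rho> a \<xi> - \<xi>) \<le> \<epsilon> * r"
  proof (cases "gauss_op \<rho> a \<xi> = 0")
    case True
    with big have "r \<le> 0"
      by (simp add: mult_le_0_iff)
    with \<xi> have "r = 0" and "\<xi> = 0"
      using norm_ge_zero[of \<xi>] by (linarith, metis norm_le_zero_iff order_trans)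
    with True show ?thesis
      by (simp add: linear_0[OF isometric_rep_linear[OF rep]])
  next
    case False
    have "0 < norm (gauss_op \<rho> a \<xi>)"
      using False by simp
    then have "0 < r"
      using norm_gauss_op_le[OF rep, of a \<xi>] \<xi> by linarith
    have "r - norm (gauss_op \<rho> a \<xi>) \<le> \<delta> * r"
      using big by (simp add: \<delta>_def algebra_simps)
    moreover have "\<delta> * r \<le> d / 24 * r"
      using \<open>0 < r\<close> by (intro mult_right_mono) (simp_all add: \<delta>_def)
    ultimately have "12 * (r - norm (gauss_op \<rho> a \<xi>)) \<le> d * r / 2"
      by simp
    also have "\<dots> < d * r"
      using mult_pos_pos[OF \<open>0 < d\<close> \<open>0 < r\<close>] by simp
    finally have defect: "12 * (r - norm (gauss_op \<rho> a \<xi>)) < d * r" .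
    note invariant = gauss_op_small_defect_imp_almost_invariant[OF rep \<xi> False uc[where r=r] defect]
    have "0 < \<epsilon> / 3 * r"
      using invariant(2) norm_ge_zero[of "gauss_op \<rho> a \<xi> - \<xi>"] by linarith
    show ?thesis
    proof (intro conjI allI impI)
      fix t assume "\<bar>t\<bar> \<le> exp a"
      with invariant(1) have "norm (\<rho> t \<xi> - \<xi>) < 2 * (\<epsilon> / 3 * r)"
        by blast
      with \<open>0 < \<epsilon> / 3 * r\<close> show "norm (\<rho> t \<xi> - \<xi>) \<le> \<epsilon> * r"
        by simp
    next
      show "norm (gauss_op \<rho> a \<xi> - \<xi>) \<le> \<epsilon> * r"
        using invariant(2) by simp
    qed
  qed
qed

lemma uniformly_convex_imp_gauss_rigid:
  assumes "uniformly_convex TYPE('a::banach)" and "0 < \<epsilon>"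
  obtains \<delta> where "0 < \<delta>" and "\<And>\<rho> :: real \<Rightarrow> 'a \<Rightarrow> 'a. isometric_rep \<rho> \<Longrightarrow> gauss_rigid \<delta> \<epsilon> \<rho>"
proof -
  obtain d where "0 < d" and "\<And>r x y::'a. norm x \<le> r \<Longrightarrow> norm y \<le> r \<Longrightarrow>
      2 * (1 - d) * r < norm (x + y) \<Longrightarrow> norm (x - y) < \<epsilon> / 3 * r"
    using uniformly_convex_scaled[OF assms(1), of "\<epsilon> / 3"] assms(2) by auto
  then have "gauss_rigid (min (d / 24) (1 / 2)) \<epsilon> \<rho>" if "isometric_rep \<rho>" for \<rho> :: "real \<Rightarrow> 'a \<Rightarrow> 'a"
    using that by (intro isometric_rep_gauss_rigid)
  moreover have "0 < min (d / 24) (1 / 2)"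
    using \<open>0 < d\<close> by simp
  ultimately show thesis
    using that by blast
qed

lemma gauss_prod_Suc:
  "gauss_prod (Suc n) \<rho> a = gauss_prod n \<rho> a \<circ> gauss_op (\<rho> n) (a n)"
proof -
  let ?F = "\<lambda>i f. gauss_op (\<rho> i) (a i) \<circ> f"
  have foldr_comp: "foldr ?F xs g = foldr ?F xs id \<circ> g" for xs and g :: "'a \<Rightarrow> 'a"
    by (induction xs) (simp_all add: comp_assoc)
  have "gauss_prod (Suc n) \<rho> a = foldr ?F [0..<n] (gauss_op (\<rho> n) (a n))"
    by (simp add: gauss_prod_def)
  also have "\<dots> = gauss_prod n \<rho> a \<circ> gauss_op (\<rho> n) (a n)"
    unfolding gauss_prod_def by (rule foldr_comp)
  finally show ?thesis .
qed

lemma norm_gauss_prod_le: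
  fixes \<xi> :: "'a::banach"
  assumes "\<forall>i<n. isometric_rep (\<rho> i)"
  shows "norm (gauss_prod n \<rho> a \<xi>) \<le> norm \<xi>"
  using assms
proof (induction n arbitrary: \<xi>)
  case (Suc n)
  then have "norm (gauss_prod n \<rho> a (gauss_op (\<rho> n) (a n) \<xi>)) \<le> norm (gauss_op (\<rho> n) (a n) \<xi>)"
    by simp
  also have "\<dots> \<le> norm \<xi>"
    using Suc.prems by (simp add: norm_gauss_op_le)
  finally show ?case
    by (simp add: gauss_prod_Suc)
qed (simp add: gauss_prod_def)

lemma gauss_prod_almost_isometric_imp_almost_invariant:
  fixes \<xi> :: "'a::banach"
  assumes "\<forall>i<n. isometric_rep (\<rho> i) \<and> gauss_rigid \<delta> \<epsilon> (\<rho> i)"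
    and "norm \<xi> \<le> r" and "(1 - \<delta>) * r \<le> norm (gauss_prod n \<rho> a \<xi>)"
    and "i < n" and "\<bar>t\<bar> \<le> exp (a i)"
  shows "norm (\<rho> i t \<xi> - \<xi>) \<le> 2 * real n * \<epsilon> * r"
  using assms
proof (induction n arbitrary: \<xi> i)
  case 0
  then show ?case by simp
next
  case (Suc n)
  define \<zeta> where "\<zeta> = gauss_op (\<rho> n) (a n) \<xi>"
  have rep_n: "isometric_rep (\<rho> n)" and rigid_n: "gauss_rigid \<delta> \<epsilon> (\<rho> n)"
    using Suc.prems(1) by simp_all
  have big: "(1 - \<delta>) * r \<le> norm (gauss_prod n \<rho> a \<zeta>)"
    using Suc.prems(3) by (simp add: \<zeta>_def gauss_prod_Suc)
  also have "\<dots> \<le> norm \<zeta>"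
    using Suc.prems(1) by (simp add: norm_gauss_prod_le)
  finally have "(1 - \<delta>) * r \<le> norm (gauss_op (\<rho> n) (a n) \<xi>)"
    unfolding \<zeta>_def .
  with rigid_n Suc.prems(2)
  have last: "(\<forall>t. \<bar>t\<bar> \<le> exp (a n) \<longrightarrow> norm (\<rho> n t \<xi> - \<xi>) \<le> \<epsilon> * r) \<and> norm (\<zeta> - \<xi>) \<le> \<epsilon> * r"
    unfolding gauss_rigid_def \<zeta>_def by blast
  show ?case
  proof (cases "i = n")
    case True
    have "0 \<le> \<epsilon> * r"
      using last norm_ge_zero[of "\<zeta> - \<xi>"] by linarith
    then have "1 * (\<epsilon> * r) \<le> (2 * real (Suc n)) * (\<epsilon> * r)"
      by (intro mult_right_mono) simp_all
    moreover have "norm (\<rho> i t \<xi> - \<xi>) \<le> \<epsilon> * r"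
      using last True Suc.prems(5) by blast
    ultimately show ?thesis
      by (simp add: mult.assoc)
  next
    case False
    have reps: "\<forall>i<n. isometric_rep (\<rho> i) \<and> gauss_rigid \<delta> \<epsilon> (\<rho> i)" and "i < n"
      using Suc.prems(1,4) False by simp_all
    have "norm \<zeta> \<le> r"
      using Suc.prems(2) norm_gauss_op_le[OF rep_n, of "a n" \<xi>] by (simp add: \<zeta>_def)
    with reps have "norm (\<rho> i t \<zeta> - \<zeta>) \<le> 2 * real n * \<epsilon> * r"
      using big \<open>i < n\<close> Suc.prems(5) by (rule Suc.IH)
    moreover have "norm (\<rho> i t \<xi> - \<xi>) \<le> norm (\<rho> i t \<zeta> - \<zeta>) + 2 * norm (\<zeta> - \<xi>)"
      using isometric_rep_displacement_le[of "\<rho> i" t \<xi> \<zeta>] Suc.prems(1,4)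
      by (simp add: norm_minus_commute)
    moreover have "2 * real (Suc n) * \<epsilon> * r = 2 * real n * \<epsilon> * r + 2 * (\<epsilon> * r)"
      by (simp add: algebra_simps)
    ultimately show ?thesis
      using last by linarith
  qed
qed

theorem proposition3p4:
  fixes n :: nat
  assumes "uniformly_convex TYPE('a::banach)"
    and "n > 0"
  shows "\<forall>\<epsilon>>0. \<exists>\<delta>>0. \<forall>(\<rho>::nat \<Rightarrow> real \<Rightarrow> 'a \<Rightarrow> 'a) (a::nat \<Rightarrow> real) (\<xi>::'a).
           (\<forall>i<n. isometric_rep (\<rho> i)) \<longrightarrow>
           norm (gauss_prod n \<rho> a \<xi>) \<ge> (1 - \<delta>) * norm \<xi> \<longrightarrow>
           (\<forall>i<n. \<forall>t. \<bar>t\<bar> \<le> exp (a i) \<longrightarrow> norm (\<rho> i t \<xi> - \<xi>) \<le> \<epsilon> * norm \<xi>)"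
proof (intro allI impI)
  fix \<epsilon> :: real
  assume "0 < \<epsilon>"
  then have pos: "0 < \<epsilon> / (2 * real n)" and cancel: "2 * real n * (\<epsilon> / (2 * real n)) = \<epsilon>"
    using assms(2) by simp_all
  obtain \<delta> where "0 < \<delta>"
    and rigid: "\<And>\<rho> :: real \<Rightarrow> 'a \<Rightarrow> 'a. isometric_rep \<rho> \<Longrightarrow> gauss_rigid \<delta> (\<epsilon> / (2 * real n)) \<rho>"
    using uniformly_convex_imp_gauss_rigid[OF assms(1) pos] by metis
  have "norm (\<rho> i t \<xi> - \<xi>) \<le> \<epsilon> * norm \<xi>"
    if reps: "\<forall>i<n. isometric_rep (\<rho> i)" and "(1 - \<delta>) * norm \<xi> \<le> norm (gauss_prod n \<rho> a \<xi>)"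
      and "i < n" and "\<bar>t\<bar> \<le> exp (a i)"
    for \<rho> :: "nat \<Rightarrow> real \<Rightarrow> 'a \<Rightarrow> 'a" and a \<xi> i t
  proof -
    have "\<forall>i<n. isometric_rep (\<rho> i) \<and> gauss_rigid \<delta> (\<epsilon> / (2 * real n)) (\<rho> i)"
      using reps rigid by blast
    from gauss_prod_almost_isometric_imp_almost_invariant[OF this order_refl that(2-)]
    show ?thesis
      by (simp only: cancel)
  qed
  with \<open>0 < \<delta>\<close> show "\<exists>\<delta>>0. \<forall>(\<rho>::nat \<Rightarrow> real \<Rightarrow> 'a \<Rightarrow> 'a) a \<xi>. (\<forall>i<n. isometric_rep (\<rho> i)) \<longrightarrow>
      (1 - \<delta>) * norm \<xi> \<le> norm (gauss_prod n \<rho> a \<xi>) \<longrightarrow>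
      (\<forall>i<n. \<forall>t. \<bar>t\<bar> \<le> exp (a i) \<longrightarrow> norm (\<rho> i t \<xi> - \<xi>) \<le> \<epsilon> * norm \<xi>)"
    by blast
qed

end
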